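(* Let $\Lambda$ be an antichain lattice in $\mathbb{Z}^n$ and let $A\subseteq\mathbb{Z}^n$ be a generic $\Lambda$-finite set. Then for each $\alpha\in A$, the set of neighbors of $\alpha$ in $A$ is finite.
   Context: Notation: $\ll$ strict componentwise inequality, $\vee$ componentwise maximum; antichain lattice = subgroup of $\mathbb{Z}^n$ whose distinct elements are pairwise incomparable. $T_\eta=\eta-\mathbb{N}^n$, $T^o_\eta=\{\beta:\beta\ll\eta\}$; the $X$-face ($\emptyset\ne X\subseteq[n]$) of $T_\eta$ is $\{\alpha\in T_\eta:\alpha_i=\eta_i\ \forall i\in X\}$. $A$ is generic if whenever $T^o_\eta\cap A=\emptyset$, each face of $T_\eta$ contains at most one point of $A$. $A$ is $\Lambda$-finite if $A=A+\Lambda$ and $A=A_0+\Lambda$ for some finite $A_0$. A neighbor of $\alpha$ in $A$ is an element $\beta\in A$, $\beta\ne\alpha$, such that $\{\alpha,\beta\}$ is neighborly, i.e. $T^o_{\alpha\vee\beta}\cap A=\emptyset$. *)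

theory Defs
  imports "HOL-Analysis.Finite_Cartesian_Product"
begin

definition cle :: "int ^ 'n \<Rightarrow> int ^ 'n \<Rightarrow> bool" where
  "cle x y \<longleftrightarrow> (\<forall>i. x $ i \<le> y $ i)"

definition cless :: "int ^ 'n \<Rightarrow> int ^ 'n \<Rightarrow> bool" where
  "cless x y \<longleftrightarrow> (\<forall>i. x $ i < y $ i)"

definition cmax :: "int ^ 'n \<Rightarrow> int ^ 'n \<Rightarrow> int ^ 'n" where
  "cmax x y = (\<chi> i. max (x $ i) (y $ i))"

definition antichain_lattice :: "(int ^ 'n) set \<Rightarrow> bool" where
  "antichain_lattice L \<longleftrightarrow>
     0 \<in> L \<and> (\<forall>a\<in>L. \<forall>b\<in>L. a + b \<in> L) \<and> (\<forall>a\<in>L. - a \<in> L) \<and>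
     (\<forall>a\<in>L. \<forall>b\<in>L. a \<noteq> b \<longrightarrow> \<not> cle a b)"

definition Tcone :: "int ^ 'n \<Rightarrow> (int ^ 'n) set" where
  "Tcone \<eta> = {\<beta>. cle \<beta> \<eta>}"

definition Tint :: "int ^ 'n \<Rightarrow> (int ^ 'n) set" where
  "Tint \<eta> = {\<beta>. cless \<beta> \<eta>}"

definition face :: "int ^ 'n \<Rightarrow> 'n set \<Rightarrow> (int ^ 'n) set" where
  "face \<eta> X = {\<alpha> \<in> Tcone \<eta>. \<forall>i\<in>X. \<alpha> $ i = \<eta> $ i}"

definition generic :: "(int ^ 'n) set \<Rightarrow> bool" where
  "generic A \<longleftrightarrow> (\<forall>\<eta>. Tint \<eta> \<inter> A = {} \<longrightarrow>
      (\<forall>X. X \<noteq> {} \<longrightarrow> (\<forall>a\<in>face \<eta> X \<inter> A. \<forall>b\<in>face \<eta> X \<inter> A. a = b)))"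

definition setplus :: "(int ^ 'n) set \<Rightarrow> (int ^ 'n) set \<Rightarrow> (int ^ 'n) set" where
  "setplus A B = {a + b | a b. a \<in> A \<and> b \<in> B}"

definition lattice_finite :: "(int ^ 'n) set \<Rightarrow> (int ^ 'n) set \<Rightarrow> bool" where
  "lattice_finite L A \<longleftrightarrow> A = setplus A L \<and> (\<exists>A0. finite A0 \<and> A = setplus A0 L)"

definition neighborly :: "(int ^ 'n) set \<Rightarrow> int ^ 'n \<Rightarrow> int ^ 'n \<Rightarrow> bool" where
  "neighborly A a b \<longleftrightarrow> Tint (cmax a b) \<inter> A = {}"

definition neighbors :: "(int ^ 'n) set \<Rightarrow> int ^ 'n \<Rightarrow> (int ^ 'n) set" where
  "neighbors A a = {b \<in> A. b \<noteq> a \<and> neighborly A a b}"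

end

theory Submission
  imports Defs
begin

text \<open>
  If \<beta> is a neighbor of \<alpha>, then \<alpha> and \<beta> are the only points of A in the box T(\<alpha> \<or> \<beta>):
  any other point x \<le> \<alpha> \<or> \<beta> of A lies on a facet of that box (the interior being empty)
  together with \<alpha> or \<beta>, contradicting genericity. Given infinitely many neighbors \<beta>,
  Dickson's lemma applied to the vectors \<alpha> \<or> \<beta> \<ge> \<alpha> yields two distinct neighbors
  \<beta>', \<beta> with \<alpha> \<or> \<beta>' \<le> \<alpha> \<or> \<beta>; then \<beta>' is a third point of A in the box of \<beta>.
\<close>

lemma nat_seq_has_mono_subseq:
  fixes s :: "nat \<Rightarrow> nat"
  obtains g :: "nat \<Rightarrow> nat" where "strict_mono g" "mono (s \<circ> g)"
proof -
  obtain f where f: "strict_mono f" "monoseq (\<lambda>n. s (f n))"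
    using seq_monosub by blast
  show thesis
  proof (cases "\<forall>m. \<forall>n\<ge>m. s (f m) \<le> s (f n)")
    case True
    then show thesis
      using f(1) that[of f] by (auto simp: mono_def)
  next
    case False
    then have decreasing: "\<forall>m. \<forall>n\<ge>m. s (f n) \<le> s (f m)"
      using f(2) unfolding monoseq_def by blast
    obtain N where N: "\<forall>a. s (f N) \<le> s (f a)"
      using ex_has_least_nat[where P = "\<lambda>_. True" and m = "\<lambda>n. s (f n)"] by blast
    have "s (f (n + N)) = s (f N)" for n
      using decreasing N by (meson antisym le_add2)
    moreover have "strict_mono (\<lambda>n. f (n + N))"
      using f(1) by (simp add: strict_mono_def)
    ultimately show thesis
      using that[of "\<lambda>n. f (n + N)"] by (simp add: mono_def o_def)
  qed
qed

lemma finite_family_has_mono_subseq: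
  fixes v :: "nat \<Rightarrow> 'i \<Rightarrow> nat"
  assumes "finite I"
  shows "\<exists>g :: nat \<Rightarrow> nat. strict_mono g \<and> (\<forall>i\<in>I. mono (\<lambda>n. v (g n) i))"
  using assms
proof (induction I rule: finite_induct)
  case empty
  show ?case
    using strict_mono_id by blast
next
  case (insert j I)
  then obtain g :: "nat \<Rightarrow> nat" where g: "strict_mono g" "\<forall>i\<in>I. mono (\<lambda>n. v (g n) i)"
    by blast
  obtain h :: "nat \<Rightarrow> nat" where h: "strict_mono h" "mono ((\<lambda>n. v (g n) j) \<circ> h)"
    using nat_seq_has_mono_subseq by blast
  have "mono (\<lambda>n. v (g (h n)) i)" if "i \<in> I" for i
    using g(2) that strict_mono_mono[OF h(1)] by (auto simp: mono_def)
  moreover have "strict_mono (g \<circ> h)"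
    using g(1) h(1) by (simp add: strict_mono_def)
  ultimately show ?case
    using h(2) unfolding o_def by blast
qed

lemma bounded_below_seq_has_cle_pair:
  fixes f :: "nat \<Rightarrow> int ^ 'n"
  assumes "\<And>k. cle c (f k)"
  shows "\<exists>m n. m < n \<and> cle (f m) (f n)"
proof -
  obtain g :: "nat \<Rightarrow> nat" where g: "strict_mono g" "\<forall>i. mono (\<lambda>k. nat (f (g k) $ i - c $ i))"
    using finite_family_has_mono_subseq[of UNIV "\<lambda>k i. nat (f k $ i - c $ i)"] by auto
  have "nat (f (g 0) $ i - c $ i) \<le> nat (f (g 1) $ i - c $ i)" for i
    using g(2) by (simp add: mono_def)
  then have "cle (f (g 0)) (f (g 1))"
    using assms unfolding cle_def by (simp add: nat_le_eq_zle)
  moreover have "g 0 < g 1"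
    using g(1) by (simp add: strict_mono_def)
  ultimately show ?thesis
    by blast
qed

lemma generic_neighbor_box:
  assumes "generic A" and "\<alpha> \<in> A" and "\<beta> \<in> neighbors A \<alpha>"
    and "x \<in> A" and "cle x (cmax \<alpha> \<beta>)"
  shows "x = \<alpha> \<or> x = \<beta>"
proof -
  let ?\<eta> = "cmax \<alpha> \<beta>"
  have "\<beta> \<in> A" and empty_interior: "Tint ?\<eta> \<inter> A = {}"
    using assms(3) by (auto simp: neighbors_def neighborly_def)
  have "\<not> cless x ?\<eta>"
    using empty_interior assms(4) by (auto simp: Tint_def)
  then obtain i where "\<not> x $ i < ?\<eta> $ i"
    by (auto simp: cless_def)
  then have "x $ i = ?\<eta> $ i"
    using assms(5) unfolding cle_def by (meson not_less order_antisym)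
  then have x_face: "x \<in> face ?\<eta> {i}"
    using assms(5) by (simp add: face_def Tcone_def)
  have face_unique: "\<And>a b. a \<in> face ?\<eta> {i} \<inter> A \<Longrightarrow> b \<in> face ?\<eta> {i} \<inter> A \<Longrightarrow> a = b"
    using assms(1) empty_interior unfolding generic_def by blast
  show ?thesis
  proof (cases "\<beta> $ i \<le> \<alpha> $ i")
    case True
    then have "\<alpha> \<in> face ?\<eta> {i}"
      by (simp add: face_def Tcone_def cle_def cmax_def)
    then show ?thesis
      using face_unique x_face assms(2,4) by blast
  next
    case False
    then have "\<beta> \<in> face ?\<eta> {i}"
      by (simp add: face_def Tcone_def cle_def cmax_def)
    then show ?thesis
      using face_unique x_face assms(4) \<open>\<beta> \<in> A\<close> by blast
  qed
qed

theorem mainTheorem14: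
  fixes L A :: "(int ^ 'n) set" and \<alpha> :: "int ^ 'n"
  assumes "antichain_lattice L"
    and "generic A"
    and "lattice_finite L A"
    and "\<alpha> \<in> A"
  shows "finite (neighbors A \<alpha>)"
proof (rule ccontr)
  assume "infinite (neighbors A \<alpha>)"
  then obtain f :: "nat \<Rightarrow> int ^ 'n" where f: "inj f" "range f \<subseteq> neighbors A \<alpha>"
    using infinite_countable_subset by blast
  have "cle \<alpha> (cmax \<alpha> (f k))" for k
    by (simp add: cle_def cmax_def)
  then obtain m n where "m < n" and box_le: "cle (cmax \<alpha> (f m)) (cmax \<alpha> (f n))"
    using bounded_below_seq_has_cle_pair[of \<alpha> "\<lambda>k. cmax \<alpha> (f k)"] by blast
  have "cle (f m) (cmax \<alpha> (f n))"
    using box_le by (simp add: cle_def cmax_def)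
  moreover have "f m \<in> A" "f m \<noteq> \<alpha>" "f n \<in> neighbors A \<alpha>"
    using f(2) by (auto simp: neighbors_def)
  moreover have "f m \<noteq> f n"
    using f(1) \<open>m < n\<close> by (simp add: inj_eq)
  ultimately show False
    using generic_neighbor_box[OF assms(2,4) \<open>f n \<in> neighbors A \<alpha>\<close> \<open>f m \<in> A\<close>] by blast
qed

end
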